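(* Let $f$ be a maximal coupling function for the kernel $p$ on the alphabet $G$, $\mathbf{U}=\{U_i\}_{i\in\mathbf{Z}}$ i.i.d. uniform on $[0,1)$, and let $A_h$ and $K'$ be as defined below. Put $K'_j=\inf\{m\in\mathbf{N}:U_j<A_m(U_{j-1},\dots,U_{j-m})\}$ for $j\in\mathbf{Z}$, $\tau^{\mathbf{K}'}_n=\sup\{s\le n:K'_j\le j-s\ \text{for all } s\le j\le n\}$, and $R^{\mathbf{K}'}_0=\{\tau^{\mathbf{K}'}_n\ge0\ \text{for all } n\in\mathbf{N}\}$. If $$\prod_{h=0}^{\infty}A_h(U_{h-1},\dots,U_0)^{-1}\in\mathcal{L}^1,$$ then $P(R^{\mathbf{K}'}_0)>0$.
   Context: $G$ finite or countable; histories $\mathbf{w}=(w_{-1},w_{-2},\dots)\in G^{-\mathbf{N}^*}$; kernel $p(g|\mathbf{w})$ measurable in $\mathbf{w}$, summing to 1 over $g$. Admissible histories $\mathcal{H}$: a letter $g$ is forbidden if $p(g|\mathbf{w})=0$ for all $\mathbf{w}$; a word $(s_0,\dots,s_{-n})$ is forbidden if $(s_{-1},\dots,s_{-n})$ is forbidden or $p(s_0|\mathbf{w})=0$ for all histories beginning with $(s_{-1},\dots,s_{-n})$; $\mathbf{w}\in\mathcal{H}$ iff no initial word $(w_{-1},\dots,w_{-n})$ is forbidden. Maximal coupling function: $a_0(g)=\inf\{p(g|\mathbf{z}):\mathbf{z}\in\mathcal{H}\}$; for $k\ge1$, $a_k(g|w_{-1},\dots,w_{-k})=\inf\{p(g|\mathbf{z}):\mathbf{z}\in\mathcal{H},(z_{-1},\dots,z_{-k})=(w_{-1},\dots,w_{-k})\}$;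 $b_k=a_k-a_{k-1}$ (with $a_{-1}\equiv0$); $a_k(w_{-1},\dots,w_{-k})=\sum_ga_k(g|w_{-1},\dots,w_{-k})$, $a_0=\sum_ga_0(g)$. It is assumed that $a_k(w_{-1},\dots,w_{-k})\uparrow1$ for every $\mathbf{w}\in\mathcal{H}$. The interval $[a_{k-1}(w_{-1},\dots,w_{-k+1}),a_k(w_{-1},\dots,w_{-k}))$ is partitioned into subintervals $B_k(g|w_{-1},\dots,w_{-k})$ of length $b_k(g|w_{-1},\dots,w_{-k})$, $g\in G$ (for $k=0$, $[0,a_0)$ is partitioned into $B_0(g)$ of length $a_0(g)$), and $f(u|\mathbf{w})=g$ on $\bigcup_kB_k(g|w_{-1},\dots,w_{-k})$. $A_0=a_0$; for $h\ge1$ and $(u_1,\dots,u_h)\in[0,1)^h$, $A_h(u_1,\dots,u_h)=\inf\{a_h(w_{-1},\dots,w_{-h}):\mathbf{w}\in J_h(u_1,\dots,u_h)\}$ where $J_h(u_1,\dots,u_h)=\{\mathbf{w}\in\mathcal{H}:w_{-k}=g \text{ whenever } u_k\in B_0(g),\ g\in G,\ 1\le k\le h\}$. Thus $A_h(U_{h-1},\dots,U_0)$ is $A_h$ evaluated at $(u_1,\dots,u_h)=(U_{h-1},\dots,U_0)$. *)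

theory Defs
  imports "HOL-Probability.Probability"
begin

text \<open>Histories: a history (w_{-1}, w_{-2}, ...) is encoded as a function
  w :: nat => 'g with w k = w_{-(k+1)}.  The kernel p g w is p(g | w).\<close>

text \<open>Words (s_0, s_{-1}, ..., s_{-n}) are encoded as lists [s_0, s_{-1}, ..., s_{-n}].\<close>
fun forbidden :: "('g \<Rightarrow> (nat \<Rightarrow> 'g) \<Rightarrow> real) \<Rightarrow> 'g list \<Rightarrow> bool" where
  "forbidden p [] = False"
| "forbidden p (s # ws) =
     (forbidden p ws \<or> (\<forall>w. (\<forall>i<length ws. w i = ws ! i) \<longrightarrow> p s w = 0))"

definition admissible :: "('g \<Rightarrow> (nat \<Rightarrow> 'g) \<Rightarrow> real) \<Rightarrow> (nat \<Rightarrow> 'g) set" where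
  "admissible p = {w. \<forall>n. \<not> forbidden p (map w [0..<n])}"

text \<open>a_k(g | w_{-1},...,w_{-k}) (k = 0 gives a_0(g)); infima in ennreal (Inf {} = top).\<close>
definition coup_a :: "('g \<Rightarrow> (nat \<Rightarrow> 'g) \<Rightarrow> real) \<Rightarrow> nat \<Rightarrow> 'g \<Rightarrow> (nat \<Rightarrow> 'g) \<Rightarrow> ennreal" where
  "coup_a p k g w = (INF z \<in> {z \<in> admissible p. \<forall>i<k. z i = w i}. ennreal (p g z))"

definition coup_a_sum :: "('g \<Rightarrow> (nat \<Rightarrow> 'g) \<Rightarrow> real) \<Rightarrow> nat \<Rightarrow> (nat \<Rightarrow> 'g) \<Rightarrow> ennreal" where
  "coup_a_sum p k w = (\<integral>\<^sup>+ g. coup_a p k g w \<partial>count_space UNIV)"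

text \<open>J_h(u_1,...,u_h), with u :: nat => real and u k = u_k for 1 <= k <= h.\<close>
definition coup_J :: "('g \<Rightarrow> (nat \<Rightarrow> 'g) \<Rightarrow> real) \<Rightarrow> ('g \<Rightarrow> real set) \<Rightarrow> nat \<Rightarrow> (nat \<Rightarrow> real) \<Rightarrow> (nat \<Rightarrow> 'g) set" where
  "coup_J p B0 h u = {w \<in> admissible p. \<forall>k\<in>{1..h}. \<forall>g. u k \<in> B0 g \<longrightarrow> w (k - 1) = g}"

definition coup_A :: "('g \<Rightarrow> (nat \<Rightarrow> 'g) \<Rightarrow> real) \<Rightarrow> ('g \<Rightarrow> real set) \<Rightarrow> nat \<Rightarrow> (nat \<Rightarrow> real) \<Rightarrow> ennreal" where
  "coup_A p B0 h u =
     (if h = 0 then coup_a_sum p 0 undefined else (INF w \<in> coup_J p B0 h u. coup_a_sum p h w))"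

text \<open>K'_j = inf {m. U_j < A_m(U_{j-1},...,U_{j-m})}, in enat (inf of empty set = infinity).\<close>
definition coup_K :: "('g \<Rightarrow> (nat \<Rightarrow> 'g) \<Rightarrow> real) \<Rightarrow> ('g \<Rightarrow> real set) \<Rightarrow> (int \<Rightarrow> 'a \<Rightarrow> real) \<Rightarrow> int \<Rightarrow> 'a \<Rightarrow> enat" where
  "coup_K p B0 U j \<omega> =
     (INF m \<in> {m. ereal (U j \<omega>) < enn2ereal (coup_A p B0 m (\<lambda>k. U (j - int k) \<omega>))}. enat m)"

text \<open>tau_n = sup {s <= n. K'_j <= j - s for all s <= j <= n}, in ereal (sup of empty set = -infinity).\<close>
definition coup_tau :: "('g \<Rightarrow> (nat \<Rightarrow> 'g) \<Rightarrow> real) \<Rightarrow> ('g \<Rightarrow> real set) \<Rightarrow> (int \<Rightarrow> 'a \<Rightarrow> real) \<Rightarrow> int \<Rightarrow> 'a \<Rightarrow> ereal" where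
  "coup_tau p B0 U n \<omega> =
     Sup ((\<lambda>s. ereal (real_of_int s)) `
       {s. s \<le> n \<and> (\<forall>j. s \<le> j \<and> j \<le> n \<longrightarrow> coup_K p B0 U j \<omega> \<le> enat (nat (j - s)))})"

definition coup_R0 :: "('g \<Rightarrow> (nat \<Rightarrow> 'g) \<Rightarrow> real) \<Rightarrow> ('g \<Rightarrow> real set) \<Rightarrow> 'a measure \<Rightarrow> (int \<Rightarrow> 'a \<Rightarrow> real) \<Rightarrow> 'a set" where
  "coup_R0 p B0 M U = {\<omega> \<in> space M. \<forall>n::nat. coup_tau p B0 U (int n) \<omega> \<ge> 0}"

definition coup_prod :: "('g \<Rightarrow> (nat \<Rightarrow> 'g) \<Rightarrow> real) \<Rightarrow> ('g \<Rightarrow> real set) \<Rightarrow> (int \<Rightarrow> 'a \<Rightarrow> real) \<Rightarrow> 'a \<Rightarrow> ennreal" where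
  "coup_prod p B0 U \<omega> =
     lim (\<lambda>N. \<Prod>h<N. inverse (coup_A p B0 h (\<lambda>k. U (int h - int k) \<omega>)))"

end

theory Submission
  imports Defs
begin

text \<open>Let \<open>G\<close> be the event that \<open>U\<^sub>h < A\<^sub>h(U\<^sub>h\<^sub>-\<^sub>1,\<dots>,U\<^sub>0)\<close> for every \<open>h \<ge> 0\<close>. On \<open>G\<close> every
  \<open>K'\<^sub>j \<le> j\<close> for \<open>j \<ge> 0\<close>, so \<open>\<tau>\<^sub>n \<ge> 0\<close> for all \<open>n\<close> and \<open>G \<subseteq> R\<^sub>0\<close>.
  Since \<open>\<Prod> A\<^sub>h\<^sup>-\<^sup>1\<close> dominates both \<open>A\<^sub>0\<^sup>-\<^sup>1\<close> and \<open>1 + \<Sum> (1 - A\<^sub>h)\<close>, integrability gives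
  \<open>a\<^sub>0 > 0\<close> and \<open>\<Sum>\<^sub>h E(1 - A\<^sub>h) < \<infinity>\<close>; fix \<open>H\<close> with \<open>\<Sum>\<^sub>h\<^sub>\<ge>\<^sub>H E(1 - A\<^sub>h) < 1\<close>.
  Let \<open>D\<close> be the event \<open>U\<^sub>0,\<dots>,U\<^sub>H\<^sub>-\<^sub>1 < a\<^sub>0\<close>, of probability \<open>a\<^sub>0\<^sup>H\<close>. On \<open>D\<close> the first \<open>H\<close>
  conditions defining \<open>G\<close> hold, since \<open>A\<^sub>h \<ge> a\<^sub>0\<close>. For \<open>h \<ge> H\<close>, integrating out the independent
  uniform \<open>U\<^sub>h\<close> gives \<open>P(D, U\<^sub>h \<ge> A\<^sub>h) = E(1\<^sub>D (1 - A\<^sub>h)) \<le> a\<^sub>0\<^sup>H E(1 - A\<^sub>h)\<close>: a value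
  \<open>U\<^sub>k \<ge> a\<^sub>0\<close> lies in no cell \<open>B\<^sub>0(g)\<close> and so imposes no constraint on \<open>w\<^sub>-\<^sub>(\<^sub>k\<^sub>+\<^sub>1\<^sub>)\<close> in \<open>J\<^sub>h\<close>,
  whence \<open>1 - A\<^sub>h\<close> is largest there, and the restriction \<open>U\<^sub>k < a\<^sub>0\<close> can only lower its mean.
  Altogether \<open>a\<^sub>0\<^sup>H \<le> P(G) + a\<^sub>0\<^sup>H \<Sum>\<^sub>h\<^sub>\<ge>\<^sub>H E(1 - A\<^sub>h)\<close>, forcing \<open>P(G) > 0\<close>.\<close>

lemma nn_integral_indep_var_iterated:
  assumes P: "prob_space M" and ind: "prob_space.indep_var M N1 X N2 Y"
    and f: "f \<in> borel_measurable (N1 \<Otimes>\<^sub>M N2)"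
  shows "(\<integral>\<^sup>+\<omega>. f (X \<omega>, Y \<omega>) \<partial>M) = (\<integral>\<^sup>+\<omega>. (\<integral>\<^sup>+\<omega>'. f (X \<omega>', Y \<omega>) \<partial>M) \<partial>M)"
proof -
  interpret prob_space M by fact
  have rv: "X \<in> measurable M N1" "Y \<in> measurable M N2"
    using ind by (blast dest: indep_var_rv1 indep_var_rv2)+
  have eq: "distr M N1 X \<Otimes>\<^sub>M distr M N2 Y = distr M (N1 \<Otimes>\<^sub>M N2) (\<lambda>x. (X x, Y x))"
    using ind indep_var_distribution_eq by blast
  interpret PY: prob_space "distr M N2 Y" by (rule prob_space_distr[OF rv(2)])
  interpret PX: prob_space "distr M N1 X" by (rule prob_space_distr[OF rv(1)])
  interpret pair_sigma_finite "distr M N1 X" "distr M N2 Y" ..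
  have f': "f \<in> borel_measurable (distr M N1 X \<Otimes>\<^sub>M distr M N2 Y)"
    using f by (simp add: sets_pair_measure_cong)
  have inner_meas: "(\<lambda>y. \<integral>\<^sup>+ x. f (x, y) \<partial>distr M N1 X) \<in> borel_measurable N2"
  proof -
    have "(\<lambda>(y,x). f (x,y)) \<in> borel_measurable (N2 \<Otimes>\<^sub>M distr M N1 X)"
      using measurable_pair_swap[OF f'] by (simp add: sets_pair_measure_cong)
    from PX.borel_measurable_nn_integral_fst[OF this] show ?thesis
      by simp
  qed
  have "(\<integral>\<^sup>+\<omega>. f (X \<omega>, Y \<omega>) \<partial>M) = (\<integral>\<^sup>+z. f z \<partial>distr M (N1 \<Otimes>\<^sub>M N2) (\<lambda>x. (X x, Y x)))"
    using rv f by (simp add: nn_integral_distr)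
  also have "\<dots> = (\<integral>\<^sup>+ y. (\<integral>\<^sup>+ x. f (x, y) \<partial>distr M N1 X) \<partial>distr M N2 Y)"
    using f' by (subst eq[symmetric], subst nn_integral_snd) auto
  also have "\<dots> = (\<integral>\<^sup>+\<omega>. (\<integral>\<^sup>+x. f (x, Y \<omega>) \<partial>distr M N1 X) \<partial>M)"
    using inner_meas rv by (subst nn_integral_distr) auto
  also have "\<dots> = (\<integral>\<^sup>+\<omega>. (\<integral>\<^sup>+\<omega>'. f (X \<omega>', Y \<omega>) \<partial>M) \<partial>M)"
  proof (rule nn_integral_cong)
    fix \<omega> assume "\<omega> \<in> space M"
    then have "Y \<omega> \<in> space N2" using rv(2) by (auto simp: measurable_def)
    then have "(\<lambda>x. f (x, Y \<omega>)) \<in> borel_measurable N1" using f by simp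
    then show "(\<integral>\<^sup>+x. f (x, Y \<omega>) \<partial>distr M N1 X) = (\<integral>\<^sup>+\<omega>'. f (X \<omega>', Y \<omega>) \<partial>M)"
      using rv by (subst nn_integral_distr) auto
  qed
  finally show ?thesis .
qed

lemma nn_integral_count_space_has_sum:
  fixes f :: "'a \<Rightarrow> real"
  assumes nonneg: "\<And>x. 0 \<le> f x" and f: "(f has_sum s) UNIV"
  shows "(\<integral>\<^sup>+ x. ennreal (f x) \<partial>count_space UNIV) = ennreal s"
proof -
  have "(\<lambda>x. norm (f x)) summable_on UNIV"
    using has_sum_imp_summable[OF f] nonneg by simp
  note abs_summable = abs_summable_equivalent[THEN iffD1, OF this]
  have "(\<integral>\<^sup>+ x. ennreal (f x) \<partial>count_space UNIV) = ennreal (infsetsum f UNIV)"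
    by (rule nn_integral_conv_infsetsum[OF abs_summable]) (use nonneg in auto)
  also have "infsetsum f UNIV = infsum f UNIV"
    by (rule infsetsum_infsum[OF abs_summable])
  also have "\<dots> = s" using f by (rule infsumI)
  finally show ?thesis .
qed

lemma ennreal_suminf_tail_less:
  fixes e :: "nat \<Rightarrow> ennreal"
  assumes fin: "(\<Sum>h. e h) < \<infinity>" and r: "0 < r"
  shows "\<exists>H. (\<Sum>i. e (i + H)) < ennreal r"
proof -
  define f where "f h = enn2real (e h)" for h
  have ef: "e h = ennreal (f h)" for h
    using ennreal_suminf_lessD[OF fin, of h] unfolding f_def by simp
  have f0: "0 \<le> f h" for h unfolding f_def by simp
  have "(\<Sum>h. ennreal (f h)) \<noteq> top" using fin unfolding ef by simp
  then have sf: "summable f" by (rule summable_suminf_not_top[OF f0])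
  obtain H where H: "\<forall>n\<ge>H. norm (\<Sum>i. f (i + n)) < r"
    using suminf_exist_split[OF r sf] by auto
  have sfH: "summable (\<lambda>i. f (i + H))" using sf by (rule summable_ignore_initial_segment)
  have "(\<Sum>i. e (i + H)) = ennreal (\<Sum>i. f (i + H))"
    unfolding ef by (rule suminf_ennreal2[OF f0 sfH])
  moreover have "(\<Sum>i. f (i + H)) < r" using H suminf_nonneg[OF sfH f0] by auto
  ultimately show ?thesis using r by (intro exI[of _ H]) (simp add: ennreal_lessI)
qed

lemma ennreal_two_minus_le_inverse:
  fixes A :: ennreal
  assumes "A \<le> 1"
  shows "1 + (1 - A) \<le> inverse A"
proof -
  define r where "r = enn2real A"
  have A: "A = ennreal r"
    unfolding r_def using assms by (cases A) (auto simp: top_unique)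
  have r: "0 \<le> r" "r \<le> 1" unfolding r_def using enn2real_mono[OF assms] by auto
  show ?thesis
  proof (cases "r = 0")
    case True then show ?thesis by (simp add: A)
  next
    case False
    then have rpos: "0 < r" using r by simp
    have "1 - A = ennreal (1 - r)" unfolding A using r by (simp add: ennreal_minus[symmetric])
    then have "1 + (1 - A) = ennreal 1 + ennreal (1 - r)" by simp
    also have "\<dots> = ennreal (2 - r)" using r by (subst ennreal_plus[symmetric]) auto
    also have "\<dots> \<le> ennreal (inverse r)"
    proof (rule ennreal_leI)
      have "(2 - r) * r = 1 - (1 - r)^2" by (simp add: power2_eq_square algebra_simps)
      then have "(2 - r) * r \<le> 1" using zero_le_power2[of "1 - r"] by linarith
      then show "2 - r \<le> inverse r" using rpos by (simp add: field_simps)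
    qed
    also have "\<dots> = inverse A" unfolding A using rpos by (simp add: inverse_ennreal)
    finally show ?thesis .
  qed
qed

lemma lim_prod_inverse_lower_bounds:
  fixes A :: "nat \<Rightarrow> ennreal"
  assumes le: "\<And>h. A h \<le> 1"
  shows "(\<Sum>h. (1 - A h)) \<le> lim (\<lambda>N. \<Prod>h<N. inverse (A h))"
    and "inverse (A 0) \<le> lim (\<lambda>N. \<Prod>h<N. inverse (A h))"
proof -
  define P where "P N = (\<Prod>h<N. inverse (A h))" for N
  have ge1: "1 \<le> inverse (A h)" for h
    using ennreal_two_minus_le_inverse[OF le] by (rule order_trans[rotated]) simp
  have "incseq P"
  proof (rule incseq_SucI)
    fix N
    have "P N * 1 \<le> P N * inverse (A N)" by (rule mult_left_mono[OF ge1]) simp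
    then show "P N \<le> P (Suc N)" by (simp add: P_def mult.commute)
  qed
  then have lim_P: "lim P = (SUP N. P N)"
    by (intro limI LIMSEQ_SUP)
  have partial_sum_le: "1 + (\<Sum>h<N. (1 - A h)) \<le> P N" for N
  proof (induction N)
    case 0 then show ?case by (simp add: P_def)
  next
    case (Suc N)
    have "1 + (\<Sum>h<Suc N. (1 - A h)) = (1 + (\<Sum>h<N. (1 - A h))) + (1 - A N)" by (simp add: add_ac)
    also have "\<dots> \<le> (1 + (\<Sum>h<N. (1 - A h))) * (1 + (1 - A N))"
      by (simp add: ring_distribs add_ac add_increasing2)
    also have "\<dots> \<le> P N * inverse (A N)"
      by (intro mult_mono Suc ennreal_two_minus_le_inverse le) auto
    finally show ?case by (simp add: P_def mult.commute)
  qed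
  show "(\<Sum>h. (1 - A h)) \<le> lim (\<lambda>N. \<Prod>h<N. inverse (A h))"
    unfolding P_def[symmetric] lim_P suminf_eq_SUP
  proof (rule SUP_mono)
    fix N show "\<exists>m\<in>UNIV. (\<Sum>h<N. (1 - A h)) \<le> P m"
      using partial_sum_le[of N] by (intro bexI[of _ N]) (auto intro: order_trans[OF _ partial_sum_le] add_increasing)
  qed
  show "inverse (A 0) \<le> lim (\<lambda>N. \<Prod>h<N. inverse (A h))"
    unfolding P_def[symmetric] lim_P
    by (rule SUP_upper2[of 1]) (auto simp: P_def)
qed

abbreviation unit_uniform :: "real measure" where
  "unit_uniform \<equiv> uniform_measure lborel {0..<1}"

lemma prob_space_unit_uniform: "prob_space unit_uniform"
  by (intro prob_space_uniform_measure) auto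

lemma emeasure_unit_uniform:
  "S \<in> sets borel \<Longrightarrow> emeasure unit_uniform S = emeasure lborel ({0..<1} \<inter> S)"
  by (subst emeasure_uniform_measure) (auto simp: divide_ennreal_def)

lemma nn_integral_unit_uniform:
  "f \<in> borel_measurable borel \<Longrightarrow>
     (\<integral>\<^sup>+x. f x \<partial>unit_uniform) = (\<integral>\<^sup>+x. f x * indicator {0..<1} x \<partial>lborel)"
  by (subst nn_integral_uniform_measure) (auto simp: divide_ennreal_def)

lemma emeasure_unit_uniform_lessThan:
  assumes "0 \<le> a" "a \<le> 1"
  shows "emeasure unit_uniform {..<a} = ennreal a"
proof -
  have "emeasure unit_uniform {..<a} = emeasure lborel ({0..<1} \<inter> {..<a})"
    by (rule emeasure_unit_uniform) simp
  also have "{0..<1} \<inter> {..<a} = {0..<a}" using assms by auto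
  finally show ?thesis using assms by simp
qed

lemma emeasure_unit_uniform_above:
  fixes A :: ennreal
  assumes "A \<le> 1"
  shows "emeasure unit_uniform {x. enn2ereal A \<le> ereal x} = 1 - A"
proof -
  define r where "r = enn2real A"
  have A: "A = ennreal r"
    unfolding r_def using assms by (cases A) (auto simp: top_unique)
  have r: "0 \<le> r" "r \<le> 1" unfolding r_def using enn2real_mono[OF assms] by auto
  have "{x. enn2ereal A \<le> ereal x} = {r..}" using r by (auto simp: A)
  then have "emeasure unit_uniform {x. enn2ereal A \<le> ereal x} = emeasure lborel ({0..<1} \<inter> {r..})"
    by (simp add: emeasure_unit_uniform divide_ennreal_def)
  also have "{0..<1} \<inter> {r..} = {r..<1::real}" using r by auto
  also have "emeasure lborel \<dots> = ennreal (1 - r)" using r by simp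
  also have "\<dots> = 1 - A" unfolding A using r by (simp add: ennreal_minus[symmetric])
  finally show ?thesis .
qed

lemma borel_measurable_nn_integral_unit_uniform:
  assumes f: "f \<in> borel_measurable (borel \<Otimes>\<^sub>M N)"
  shows "(\<lambda>y. \<integral>\<^sup>+x. f (x, y) \<partial>unit_uniform) \<in> borel_measurable N"
proof -
  interpret Q: prob_space unit_uniform by (rule prob_space_unit_uniform)
  have "f \<in> borel_measurable (unit_uniform \<Otimes>\<^sub>M N)"
    using f by (simp add: sets_pair_measure_cong)
  then have "(\<lambda>(y,x). f (x,y)) \<in> borel_measurable (N \<Otimes>\<^sub>M unit_uniform)"
    using measurable_pair_swap by fastforce
  from Q.borel_measurable_nn_integral_fst[OF this] show ?thesis by simp
qed

lemma nn_integral_unit_uniform_lessThan_le: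
  fixes \<phi> :: "real \<Rightarrow> ennreal" and a :: real
  assumes a: "0 \<le> a" "a \<le> 1" and \<phi>: "\<phi> \<in> borel_measurable borel"
    and le: "\<And>x. \<phi> x \<le> \<phi> a" and eq: "\<And>x. a \<le> x \<Longrightarrow> x < 1 \<Longrightarrow> \<phi> x = \<phi> a"
  shows "(\<integral>\<^sup>+x. indicator {..<a} x * \<phi> x \<partial>unit_uniform) \<le> ennreal a * (\<integral>\<^sup>+x. \<phi> x \<partial>unit_uniform)"
proof -
  define I where "I = (\<integral>\<^sup>+x. \<phi> x * indicator {0..<a} x \<partial>lborel)"
  have lhs: "(\<integral>\<^sup>+x. indicator {..<a} x * \<phi> x \<partial>unit_uniform) = I"
  proof -
    have "(\<integral>\<^sup>+x. indicator {..<a} x * \<phi> x \<partial>unit_uniform)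
        = (\<integral>\<^sup>+x. (indicator {..<a} x * \<phi> x) * indicator {0..<1} x \<partial>lborel)"
      by (rule nn_integral_unit_uniform) (use \<phi> in measurable)
    also have "\<dots> = I" unfolding I_def
      by (rule nn_integral_cong) (use a in \<open>auto simp: indicator_def\<close>)
    finally show ?thesis .
  qed
  have "(\<integral>\<^sup>+x. \<phi> x \<partial>unit_uniform) = (\<integral>\<^sup>+x. \<phi> x * indicator {0..<1} x \<partial>lborel)"
    by (rule nn_integral_unit_uniform[OF \<phi>])
  also have "\<dots> = (\<integral>\<^sup>+x. \<phi> x * indicator {0..<a} x + \<phi> a * indicator {a..<1} x \<partial>lborel)"
  proof (rule nn_integral_cong)
    fix x :: real
    show "\<phi> x * indicator {0..<1} x = \<phi> x * indicator {0..<a} x + \<phi> a * indicator {a..<1} x"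
      using a eq[of x] by (cases "x < a"; cases "0 \<le> x"; cases "x < 1") (simp_all add: indicator_def)
  qed
  also have "\<dots> = I + \<phi> a * ennreal (1 - a)"
    unfolding I_def using \<phi> a by (subst nn_integral_add) (auto simp: nn_integral_cmult)
  finally have rhs: "(\<integral>\<^sup>+x. \<phi> x \<partial>unit_uniform) = I + \<phi> a * ennreal (1 - a)" .
  have "I \<le> (\<integral>\<^sup>+x. \<phi> a * indicator {0..<a} x \<partial>lborel)"
    unfolding I_def by (rule nn_integral_mono) (use le in \<open>auto split: split_indicator\<close>)
  also have "\<dots> = \<phi> a * ennreal a" using a by (simp add: nn_integral_cmult)
  finally have I_le: "I \<le> \<phi> a * ennreal a" .
  have "ennreal a + ennreal (1 - a) = 1"
    using a by (simp add: ennreal_plus[symmetric] del: ennreal_plus)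
  then have "I = ennreal a * I + ennreal (1 - a) * I"
    by (metis distrib_right mult_1)
  also have "\<dots> \<le> ennreal a * I + ennreal (1 - a) * (\<phi> a * ennreal a)"
    by (intro add_left_mono mult_left_mono I_le) auto
  also have "\<dots> = ennreal a * (I + \<phi> a * ennreal (1 - a))"
    by (simp add: distrib_left mult_ac)
  finally show ?thesis unfolding lhs rhs .
qed

definition cell :: "('g \<Rightarrow> real set) \<Rightarrow> real \<Rightarrow> 'g option" where
  "cell B0 r = (if \<exists>g. r \<in> B0 g then Some (SOME g. r \<in> B0 g) else None)"

lemma cell_eq_Some_iff: "disjoint_family B0 \<Longrightarrow> cell B0 r = Some g \<longleftrightarrow> r \<in> B0 g"
  unfolding cell_def disjoint_family_on_def by (auto intro: someI2)

lemma cell_eq_None_iff: "cell B0 r = None \<longleftrightarrow> (\<forall>g. r \<notin> B0 g)"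
  unfolding cell_def by auto

lemma all_in_cell_imp_iff:
  assumes "disjoint_family B0"
  shows "(\<forall>g. r \<in> B0 g \<longrightarrow> P g) \<longleftrightarrow> (case cell B0 r of None \<Rightarrow> True | Some g \<Rightarrow> P g)"
proof (cases "cell B0 r")
  case (Some g)
  then have "r \<in> B0 g' \<longleftrightarrow> g' = g" for g'
    using cell_eq_Some_iff[OF assms, of r g'] by auto
  then show ?thesis using Some by simp
next
  case None
  then show ?thesis using cell_eq_None_iff[of B0 r] by simp
qed

lemma coup_J_eq_cells:
  "disjoint_family B0 \<Longrightarrow> coup_J p B0 h u =
     {w \<in> admissible p. \<forall>k\<in>{1..h}. case cell B0 (u k) of None \<Rightarrow> True | Some g \<Rightarrow> w (k - 1) = g}"
  unfolding coup_J_def by (simp only: all_in_cell_imp_iff)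

lemma coup_A_cong_cells:
  assumes "disjoint_family B0" "\<And>k. k \<in> {1..h} \<Longrightarrow> cell B0 (u k) = cell B0 (u' k)"
  shows "coup_A p B0 h u = coup_A p B0 h u'"
proof -
  have "coup_J p B0 h u = coup_J p B0 h u'"
    unfolding coup_J_eq_cells[OF assms(1)] using assms(2) by auto
  then show ?thesis by (simp add: coup_A_def)
qed

text \<open>A coordinate outside every cell imposes no constraint, so it can only enlarge \<open>J\<^sub>h\<close>.\<close>
lemma coup_A_mono_cells:
  assumes "disjoint_family B0"
    and "\<And>k. k \<in> {1..h} \<Longrightarrow> cell B0 (u' k) = None \<or> cell B0 (u' k) = cell B0 (u k)"
  shows "coup_A p B0 h u' \<le> coup_A p B0 h u"
proof -
  have "coup_J p B0 h u \<subseteq> coup_J p B0 h u'"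
    unfolding coup_J_eq_cells[OF assms(1)]
  proof safe
    fix w k assume w: "\<forall>k\<in>{1..h}. case cell B0 (u k) of None \<Rightarrow> True | Some g \<Rightarrow> w (k - 1) = g"
      and k: "k \<in> {1..h}"
    then show "case cell B0 (u' k) of None \<Rightarrow> True | Some g \<Rightarrow> w (k - 1) = g"
      using assms(2)[OF k] by (cases "cell B0 (u' k)") auto
  qed
  then have "(INF w\<in>coup_J p B0 h u'. coup_a_sum p h w) \<le> (INF w\<in>coup_J p B0 h u. coup_a_sum p h w)"
    by (rule INF_superset_mono) simp
  then show ?thesis unfolding coup_A_def by simp
qed

lemma coup_a_0_indep: "coup_a p 0 g x = coup_a p 0 g y"
  by (simp add: coup_a_def)

lemma coup_a_0_le: "coup_a p 0 g x \<le> coup_a p h g w"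
  unfolding coup_a_def by (rule INF_superset_mono) auto

lemma coup_a_sum_0_le: "coup_a_sum p 0 x \<le> coup_a_sum p h w"
  unfolding coup_a_sum_def by (rule nn_integral_mono) (rule coup_a_0_le)

lemma coup_A_0_le: "coup_A p B0 0 u' \<le> coup_A p B0 h u"
proof (cases "h = 0")
  case False
  have "coup_a_sum p 0 undefined \<le> (INF w\<in>coup_J p B0 h u. coup_a_sum p h w)"
    by (rule INF_greatest) (rule coup_a_sum_0_le)
  then show ?thesis using False by (simp add: coup_A_def)
qed (simp add: coup_A_def)

lemma coup_A_no_admissible:
  fixes p :: "'g \<Rightarrow> (nat \<Rightarrow> 'g) \<Rightarrow> real"
  assumes "admissible p = {}"
  shows "coup_A p B0 h u = top"
proof (cases "h = 0")
  case True
  have "coup_a p 0 g undefined = top" for g unfolding coup_a_def using assms by simp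
  then have "coup_a_sum p 0 undefined = (\<integral>\<^sup>+g. top \<partial>count_space (UNIV::'g set))"
    unfolding coup_a_sum_def by simp
  also have "\<dots> = top" by (simp add: ennreal_top_mult emeasure_count_space_eq_0)
  finally show ?thesis using True by (simp add: coup_A_def)
next
  case False
  have "coup_J p B0 h u = {}" using assms by (simp add: coup_J_def)
  then show ?thesis using False by (simp add: coup_A_def)
qed

definition prepend_hist :: "'g list \<Rightarrow> (nat \<Rightarrow> 'g) \<Rightarrow> nat \<Rightarrow> 'g" where
  "prepend_hist cs z = (\<lambda>i. if i < length cs then cs ! i else z (i - length cs))"

lemma prepend_hist_Cons: "prepend_hist (c # cs) z = prepend_hist [c] (prepend_hist cs z)"
  by (auto simp: prepend_hist_def fun_eq_iff nth_Cons')

lemma admissible_prepend_letter: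
  assumes g: "coup_a p 0 g x > 0" and z: "z \<in> admissible p"
  shows "prepend_hist [g] z \<in> admissible p"
  unfolding admissible_def
proof safe
  fix n assume forb: "forbidden p (map (prepend_hist [g] z) [0..<n])"
  show False
  proof (cases n)
    case (Suc m)
    have word: "map (prepend_hist [g] z) [0..<n] = g # map z [0..<m]"
      unfolding Suc map_upt_Suc by (simp add: prepend_hist_def)
    have "\<not> forbidden p (map z [0..<m])" using z by (simp add: admissible_def)
    moreover have "coup_a p 0 g x \<le> ennreal (p g z)"
      unfolding coup_a_def by (rule INF_lower) (use z in auto)
    with g have "p g z \<noteq> 0" by auto
    ultimately show False using forb unfolding word by auto
  qed (use forb in simp)
qed

lemma admissible_prepend_hist:
  assumes "\<And>c. c \<in> set cs \<Longrightarrow> coup_a p 0 c x > 0" and z: "z \<in> admissible p"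
  shows "prepend_hist cs z \<in> admissible p"
  using assms(1)
proof (induction cs)
  case Nil then show ?case using z by (simp add: prepend_hist_def)
next
  case (Cons c cs)
  then show ?case
    unfolding prepend_hist_Cons[of c cs] by (intro admissible_prepend_letter) auto
qed

locale coupling_partition =
  fixes p :: "'g::countable \<Rightarrow> (nat \<Rightarrow> 'g) \<Rightarrow> real" and B0 :: "'g \<Rightarrow> real set"
  assumes kernel_nonneg: "\<And>g w. p g w \<ge> 0"
    and kernel_sum: "\<And>w. ((\<lambda>g. p g w) has_sum 1) UNIV"
    and B0_int: "\<And>g. \<exists>l. B0 g = {l..<l + enn2real (coup_a p 0 g undefined)}"
    and B0_disj: "disjoint_family B0"
    and B0_union: "(\<Union>g. B0 g) = {0..<enn2real (coup_a_sum p 0 undefined)}"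
begin

definition a0 :: real where
  "a0 = enn2real (coup_a_sum p 0 undefined)"

lemma cell_ge_a0: "a0 \<le> x \<Longrightarrow> cell B0 x = None"
proof -
  assume "a0 \<le> x"
  then have "x \<notin> (\<Union>g. B0 g)" unfolding B0_union a0_def[symmetric] by auto
  then show ?thesis by (simp add: cell_eq_None_iff)
qed

lemma coup_a_0_pos_of_cell:
  assumes "cell B0 r = Some g"
  shows "coup_a p 0 g x > 0"
proof -
  have r: "r \<in> B0 g" using assms cell_eq_Some_iff[OF B0_disj] by blast
  obtain l where "B0 g = {l..<l + enn2real (coup_a p 0 g undefined)}" using B0_int by blast
  with r have "enn2real (coup_a p 0 g undefined) > 0" by auto
  then have "coup_a p 0 g undefined > 0"
    by (metis enn2real_0 gr_zeroI less_irrefl)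
  then show ?thesis using coup_a_0_indep by metis
qed

lemma coup_a_sum_le_1:
  assumes w: "w \<in> admissible p"
  shows "coup_a_sum p h w \<le> 1"
proof -
  have "coup_a_sum p h w \<le> (\<integral>\<^sup>+ g. ennreal (p g w) \<partial>count_space UNIV)"
    unfolding coup_a_sum_def
    by (rule nn_integral_mono) (unfold coup_a_def, rule INF_lower, use w in auto)
  also have "\<dots> = 1"
    using nn_integral_count_space_has_sum[OF kernel_nonneg kernel_sum] by simp
  finally show ?thesis .
qed

text \<open>Cells are only assigned to letters \<open>g\<close> with \<open>a\<^sub>0(g) > 0\<close>, which may be prepended to any
  admissible history; unconstrained positions are filled with one such letter.\<close>
lemma coup_J_nonempty:
  assumes adm: "admissible p \<noteq> {}"
  shows "coup_J p B0 h u \<noteq> {}"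
proof -
  obtain z where z: "z \<in> admissible p" using adm by blast
  show ?thesis
  proof (cases "\<exists>k\<in>{1..h}. cell B0 (u k) \<noteq> None")
    case False
    then have "z \<in> coup_J p B0 h u" using z by (auto simp: coup_J_eq_cells[OF B0_disj])
    then show ?thesis by blast
  next
    case True
    then obtain k0 g0 where g0: "cell B0 (u k0) = Some g0" by blast
    define cs where
      "cs = map (\<lambda>i. case cell B0 (u (Suc i)) of None \<Rightarrow> g0 | Some g \<Rightarrow> g) [0..<h]"
    have "prepend_hist cs z \<in> admissible p"
    proof (rule admissible_prepend_hist[OF _ z])
      fix c assume "c \<in> set cs"
      then obtain i where "c = (case cell B0 (u (Suc i)) of None \<Rightarrow> g0 | Some g \<Rightarrow> g)"
        unfolding cs_def by auto
      then show "coup_a p 0 c undefined > 0"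
        using coup_a_0_pos_of_cell[OF g0]
        by (cases "cell B0 (u (Suc i))") (auto intro: coup_a_0_pos_of_cell)
    qed
    moreover have "case cell B0 (u k) of None \<Rightarrow> True | Some g \<Rightarrow> prepend_hist cs z (k - 1) = g"
      if "k \<in> {1..h}" for k
      using that by (cases "cell B0 (u k)") (auto simp: prepend_hist_def cs_def)
    ultimately have "prepend_hist cs z \<in> coup_J p B0 h u"
      by (auto simp: coup_J_eq_cells[OF B0_disj])
    then show ?thesis by blast
  qed
qed

lemma coup_A_le_1:
  assumes adm: "admissible p \<noteq> {}"
  shows "coup_A p B0 h u \<le> 1"
proof (cases "h = 0")
  case True
  obtain z where z: "z \<in> admissible p" using adm by blast
  have "coup_a_sum p 0 undefined = coup_a_sum p 0 z"
    unfolding coup_a_sum_def by (simp add: coup_a_0_indep[of p _ undefined z])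
  also have "\<dots> \<le> 1" by (rule coup_a_sum_le_1[OF z])
  finally show ?thesis using True by (simp add: coup_A_def)
next
  case False
  obtain w where w: "w \<in> coup_J p B0 h u" using coup_J_nonempty[OF adm] by blast
  have "(INF w\<in>coup_J p B0 h u. coup_a_sum p h w) \<le> coup_a_sum p h w" by (rule INF_lower[OF w])
  also have "\<dots> \<le> 1" using w by (intro coup_a_sum_le_1) (simp add: coup_J_def)
  finally show ?thesis using False by (simp add: coup_A_def)
qed

text \<open>\<open>A\<^sub>h(u)\<close> depends on \<open>u\<close> only through the cells of \<open>u\<^sub>1, \<dots>, u\<^sub>h\<close>, i.e.\ through a list over
  the countable type \<open>'g option\<close>; this gives its measurability.\<close>
definition cell_rep :: "'g option \<Rightarrow> real" where
  "cell_rep c = (case c of None \<Rightarrow> a0 | Some g \<Rightarrow> (SOME r. r \<in> B0 g))"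

lemma cell_cell_rep: "cell B0 (cell_rep (cell B0 r)) = cell B0 r"
proof (cases "cell B0 r")
  case None then show ?thesis by (simp add: cell_rep_def cell_ge_a0)
next
  case (Some g)
  then have "r \<in> B0 g" using cell_eq_Some_iff[OF B0_disj] by blast
  then have "(SOME r. r \<in> B0 g) \<in> B0 g" by (rule someI)
  moreover have "cell_rep (cell B0 r) = (SOME r. r \<in> B0 g)" using Some by (simp add: cell_rep_def)
  ultimately show ?thesis using Some cell_eq_Some_iff[OF B0_disj] by metis
qed

definition coup_A_of_cells :: "nat \<Rightarrow> 'g option list \<Rightarrow> ennreal" where
  "coup_A_of_cells h cs = coup_A p B0 h (\<lambda>k. cell_rep (cs ! (k - 1)))"

lemma coup_A_eq_of_cells:
  "coup_A p B0 h u = coup_A_of_cells h (map (\<lambda>k. cell B0 (u k)) [1..<h+1])"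
  unfolding coup_A_of_cells_def
proof (rule coup_A_cong_cells[OF B0_disj])
  fix k assume "k \<in> {1..h}"
  then have "map (\<lambda>k. cell B0 (u k)) [1..<h+1] ! (k - 1) = cell B0 (u k)"
    by (subst nth_map) (auto simp del: upt_Suc)
  then show "cell B0 (u k) = cell B0 (cell_rep (map (\<lambda>k. cell B0 (u k)) [1..<h + 1] ! (k - 1)))"
    by (simp add: cell_cell_rep)
qed

lemma measurable_cell: "cell B0 \<in> measurable borel (count_space UNIV)"
  unfolding measurable_count_space_eq2_countable
proof (intro conjI ballI)
  fix c :: "'g option"
  show "cell B0 -` {c} \<inter> space borel \<in> sets borel"
  proof (cases c)
    case None
    have "cell B0 -` {c} = - (\<Union>g. B0 g)" using None by (auto simp: cell_eq_None_iff)
    then show ?thesis unfolding B0_union by simp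
  next
    case (Some g)
    obtain l where "B0 g = {l..<l + enn2real (coup_a p 0 g undefined)}" using B0_int by blast
    moreover have "cell B0 -` {c} = B0 g" using Some by (auto simp: cell_eq_Some_iff[OF B0_disj])
    ultimately show ?thesis by simp
  qed
qed simp

lemma measurable_cells:
  assumes "\<And>k. k \<in> set L \<Longrightarrow> F k \<in> borel_measurable N"
  shows "(\<lambda>\<omega>. map (\<lambda>k. cell B0 (F k \<omega>)) L) \<in> measurable N (count_space UNIV)"
  using assms
proof (induction L)
  case (Cons k L)
  have hd: "(\<lambda>\<omega>. cell B0 (F k \<omega>)) \<in> measurable N (count_space UNIV)"
    using measurable_compose[OF Cons.prems[of k] measurable_cell] by simp
  have tl: "(\<lambda>\<omega>. map (\<lambda>k. cell B0 (F k \<omega>)) L) \<in> measurable N (count_space UNIV)"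
    using Cons by simp
  have "(\<lambda>\<omega>. (cell B0 (F k \<omega>), map (\<lambda>k. cell B0 (F k \<omega>)) L))
      \<in> measurable N (count_space (UNIV \<times> UNIV))"
    using measurable_Pair[OF hd tl] by (simp add: pair_measure_countable)
  then have "(\<lambda>\<omega>. case_prod Cons (cell B0 (F k \<omega>), map (\<lambda>k. cell B0 (F k \<omega>)) L))
      \<in> measurable N (count_space UNIV)"
    by (rule measurable_compose) simp
  then show ?case by simp
qed simp

lemma measurable_coup_A:
  assumes "\<And>k. k \<in> {1..h} \<Longrightarrow> F k \<in> borel_measurable N"
  shows "(\<lambda>\<omega>. coup_A p B0 h (\<lambda>k. F k \<omega>)) \<in> borel_measurable N"
proof -
  have "(\<lambda>\<omega>. map (\<lambda>k. cell B0 (F k \<omega>)) [1..<h+1]) \<in> measurable N (count_space UNIV)"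
    by (rule measurable_cells) (use assms in auto)
  then have "(\<lambda>\<omega>. coup_A_of_cells h (map (\<lambda>k. cell B0 (F k \<omega>)) [1..<h+1])) \<in> borel_measurable N"
    by (rule measurable_compose) simp
  then show ?thesis unfolding coup_A_eq_of_cells[of h] .
qed

definition A_path :: "nat \<Rightarrow> (int \<Rightarrow> real) \<Rightarrow> ennreal" where
  "A_path h x = coup_A p B0 h (\<lambda>k. x (int h - int k))"

lemma A_path_cong:
  assumes "\<And>j. j \<in> {0..<int h} \<Longrightarrow> cell B0 (x j) = cell B0 (y j)"
  shows "A_path h x = A_path h y"
  unfolding A_path_def by (rule coup_A_cong_cells[OF B0_disj]) (use assms in auto)

lemma A_path_mono_cells:
  assumes "\<And>j. j \<in> {0..<int h} \<Longrightarrow> cell B0 (x j) = None \<or> cell B0 (x j) = cell B0 (y j)"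
  shows "A_path h x \<le> A_path h y"
  unfolding A_path_def by (rule coup_A_mono_cells[OF B0_disj]) (use assms in auto)

lemma measurable_A_path_upd:
  assumes "{0..<int h} - {j} \<subseteq> I"
  shows "(\<lambda>z. A_path h ((snd z)(j := fst z))) \<in> borel_measurable (borel \<Otimes>\<^sub>M PiM I (\<lambda>_. borel))"
  unfolding A_path_def
proof (rule measurable_coup_A)
  fix k assume k: "k \<in> {1..h}"
  show "(\<lambda>z. ((snd z)(j := fst z)) (int h - int k)) \<in> borel_measurable (borel \<Otimes>\<^sub>M PiM I (\<lambda>_. borel))"
  proof (cases "int h - int k = j")
    case False
    then have "int h - int k \<in> I" using k assms by auto
    with False show ?thesis
      by (simp add: measurable_compose[OF measurable_snd measurable_component_singleton])
  qed simp
qed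

lemma measurable_A_path:
  assumes "{0..<int h} \<subseteq> I"
  shows "A_path h \<in> borel_measurable (PiM I (\<lambda>_. borel))"
  unfolding A_path_def
  by (rule measurable_coup_A) (use assms in \<open>auto intro!: measurable_component_singleton\<close>)

end

locale coupling_process = coupling_partition p B0
  for p :: "'g::countable \<Rightarrow> (nat \<Rightarrow> 'g) \<Rightarrow> real" and B0 +
  fixes M :: "'a measure" and U :: "int \<Rightarrow> 'a \<Rightarrow> real"
  assumes prob: "prob_space M"
    and indep: "prob_space.indep_vars M (\<lambda>_. borel) U UNIV"
    and unif: "\<And>i. distr M lborel (U i) = uniform_measure lborel {0..<1::real}"
begin

interpretation P: prob_space M by (rule prob)

lemma measurable_U[measurable]: "U i \<in> borel_measurable M"
  using indep unfolding P.indep_vars_def by auto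

lemma nn_integral_integrate_coordinate:
  assumes j: "j \<notin> I" and f: "f \<in> borel_measurable (borel \<Otimes>\<^sub>M PiM I (\<lambda>_. borel))"
  shows "(\<integral>\<^sup>+\<omega>. f (U j \<omega>, restrict (\<lambda>i. U i \<omega>) I) \<partial>M)
       = (\<integral>\<^sup>+\<omega>. (\<integral>\<^sup>+x. f (x, restrict (\<lambda>i. U i \<omega>) I) \<partial>unit_uniform) \<partial>M)"
proof -
  have ind: "P.indep_var (PiM {j} (\<lambda>_. borel)) (\<lambda>\<omega>. restrict (\<lambda>i. U i \<omega>) {j})
      (PiM I (\<lambda>_. borel)) (\<lambda>\<omega>. restrict (\<lambda>i. U i \<omega>) I)"
    by (rule P.indep_var_restrict[OF indep]) (use j in auto)
  define f' where "f' z = f (fst z j, snd z)" for z :: "(int \<Rightarrow> real) \<times> (int \<Rightarrow> real)"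
  have "(\<lambda>z::(int \<Rightarrow> real) \<times> (int \<Rightarrow> real). (fst z j, snd z))
      \<in> measurable (PiM {j} (\<lambda>_. borel) \<Otimes>\<^sub>M PiM I (\<lambda>_. borel)) (borel \<Otimes>\<^sub>M PiM I (\<lambda>_. borel))"
    by (intro measurable_Pair measurable_compose[OF measurable_fst] measurable_component_singleton
        measurable_snd) auto
  from measurable_compose[OF this f]
  have f': "f' \<in> borel_measurable (PiM {j} (\<lambda>_. borel) \<Otimes>\<^sub>M PiM I (\<lambda>_. borel))"
    unfolding f'_def[abs_def] by simp
  have "(\<integral>\<^sup>+\<omega>. f (U j \<omega>, restrict (\<lambda>i. U i \<omega>) I) \<partial>M)
      = (\<integral>\<^sup>+\<omega>. f' (restrict (\<lambda>i. U i \<omega>) {j}, restrict (\<lambda>i. U i \<omega>) I) \<partial>M)"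
    by (simp add: f'_def)
  also have "\<dots> = (\<integral>\<^sup>+\<omega>. (\<integral>\<^sup>+\<omega>'. f (U j \<omega>', restrict (\<lambda>i. U i \<omega>) I) \<partial>M) \<partial>M)"
    by (subst nn_integral_indep_var_iterated[OF prob ind f']) (simp add: f'_def)
  also have "\<dots> = (\<integral>\<^sup>+\<omega>. (\<integral>\<^sup>+x. f (x, restrict (\<lambda>i. U i \<omega>) I) \<partial>unit_uniform) \<partial>M)"
  proof (rule nn_integral_cong)
    fix \<omega> assume "\<omega> \<in> space M"
    have "restrict (\<lambda>i. U i \<omega>) I \<in> space (PiM I (\<lambda>_. borel))" by (simp add: space_PiM)
    then have "(\<lambda>x. f (x, restrict (\<lambda>i. U i \<omega>) I)) \<in> borel_measurable borel" using f by simp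
    then have "(\<integral>\<^sup>+\<omega>'. f (U j \<omega>', restrict (\<lambda>i. U i \<omega>) I) \<partial>M)
        = (\<integral>\<^sup>+x. f (x, restrict (\<lambda>i. U i \<omega>) I) \<partial>distr M lborel (U j))"
      by (subst nn_integral_distr) (auto simp: measurable_lborel1)
    then show "(\<integral>\<^sup>+\<omega>'. f (U j \<omega>', restrict (\<lambda>i. U i \<omega>) I) \<partial>M)
        = (\<integral>\<^sup>+x. f (x, restrict (\<lambda>i. U i \<omega>) I) \<partial>unit_uniform)"
      by (simp add: unif)
  qed
  finally show ?thesis .
qed

lemma nn_integral_coordinate_lessThan_le:
  assumes j: "j \<notin> I" and a: "0 \<le> a" "a \<le> 1"
    and \<psi>: "\<psi> \<in> borel_measurable (borel \<Otimes>\<^sub>M PiM I (\<lambda>_. borel))"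
    and le: "\<And>x y. \<psi> (x, y) \<le> \<psi> (a, y)" and eq: "\<And>x y. a \<le> x \<Longrightarrow> x < 1 \<Longrightarrow> \<psi> (x, y) = \<psi> (a, y)"
  shows "(\<integral>\<^sup>+\<omega>. indicator {..<a} (U j \<omega>) * \<psi> (U j \<omega>, restrict (\<lambda>i. U i \<omega>) I) \<partial>M)
    \<le> ennreal a * (\<integral>\<^sup>+\<omega>. \<psi> (U j \<omega>, restrict (\<lambda>i. U i \<omega>) I) \<partial>M)"
proof -
  define Y where "Y \<omega> = restrict (\<lambda>i. U i \<omega>) I" for \<omega>
  have Y: "Y \<in> measurable M (PiM I (\<lambda>_. borel))"
    unfolding Y_def by (rule measurable_restrict) simp
  have f: "(\<lambda>z. indicator {..<a} (fst z) * \<psi> z) \<in> borel_measurable (borel \<Otimes>\<^sub>M PiM I (\<lambda>_. borel))"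
    using \<psi> by measurable
  have "(\<integral>\<^sup>+\<omega>. indicator {..<a} (U j \<omega>) * \<psi> (U j \<omega>, Y \<omega>) \<partial>M)
      = (\<integral>\<^sup>+\<omega>. (\<integral>\<^sup>+x. indicator {..<a} x * \<psi> (x, Y \<omega>) \<partial>unit_uniform) \<partial>M)"
    unfolding Y_def using nn_integral_integrate_coordinate[OF j f] by simp
  also have "\<dots> \<le> (\<integral>\<^sup>+\<omega>. ennreal a * (\<integral>\<^sup>+x. \<psi> (x, Y \<omega>) \<partial>unit_uniform) \<partial>M)"
  proof (intro nn_integral_mono nn_integral_unit_uniform_lessThan_le a le eq)
    fix \<omega>
    have "Y \<omega> \<in> space (PiM I (\<lambda>_. borel))" by (simp add: Y_def space_PiM)
    then show "(\<lambda>x. \<psi> (x, Y \<omega>)) \<in> borel_measurable borel" using \<psi> by simp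
  qed
  also have "\<dots> = ennreal a * (\<integral>\<^sup>+\<omega>. (\<integral>\<^sup>+x. \<psi> (x, Y \<omega>) \<partial>unit_uniform) \<partial>M)"
    by (rule nn_integral_cmult)
      (rule measurable_compose[OF Y borel_measurable_nn_integral_unit_uniform[OF \<psi>]])
  also have "(\<integral>\<^sup>+\<omega>. (\<integral>\<^sup>+x. \<psi> (x, Y \<omega>) \<partial>unit_uniform) \<partial>M) = (\<integral>\<^sup>+\<omega>. \<psi> (U j \<omega>, Y \<omega>) \<partial>M)"
    unfolding Y_def using nn_integral_integrate_coordinate[OF j \<psi>] by simp
  finally show ?thesis unfolding Y_def .
qed

definition A_U :: "nat \<Rightarrow> 'a \<Rightarrow> ennreal" where
  "A_U h \<omega> = A_path h (\<lambda>i. U i \<omega>)"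

definition below_path :: "nat \<Rightarrow> (int \<Rightarrow> real) set" where
  "below_path m = {y. \<forall>k<m. y (int k) < a0}"

definition below :: "nat \<Rightarrow> 'a set" where
  "below m = {\<omega> \<in> space M. \<forall>k<m. U (int k) \<omega> < a0}"

definition fails :: "nat \<Rightarrow> 'a set" where
  "fails h = {\<omega> \<in> space M. enn2ereal (A_U h \<omega>) \<le> ereal (U (int h) \<omega>)}"

definition good :: "'a set" where
  "good = {\<omega> \<in> space M. \<forall>h. ereal (U (int h) \<omega>) < enn2ereal (A_U h \<omega>)}"

lemma measurable_A_U[measurable]: "A_U h \<in> borel_measurable M"
  unfolding A_U_def A_path_def by (rule measurable_coup_A) simp

lemma sets_below[measurable]: "below m \<in> sets M"
  unfolding below_def by measurable

lemma sets_fails[measurable]: "fails h \<in> sets M"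
  unfolding fails_def by measurable

lemma sets_good[measurable]: "good \<in> sets M"
  unfolding good_def by measurable

lemma measurable_indicator_below_path:
  assumes "{0..<int m} \<subseteq> I"
  shows "(indicator (below_path m) :: _ \<Rightarrow> ennreal) \<in> borel_measurable (PiM I (\<lambda>_. borel))"
  unfolding below_path_def
  by (rule borel_measurable_indicator', measurable) (use assms in auto)

lemma below_iff_restrict:
  assumes "\<omega> \<in> space M" "{0..<int m} \<subseteq> I"
  shows "\<omega> \<in> below m \<longleftrightarrow> restrict (\<lambda>i. U i \<omega>) I \<in> below_path m"
proof -
  have "int k \<in> I" if "k < m" for k using assms that by auto
  then show ?thesis using assms(1) unfolding below_def below_path_def by auto
qed

lemma below_Suc: "\<omega> \<in> below (Suc m) \<longleftrightarrow> \<omega> \<in> below m \<and> U (int m) \<omega> < a0"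
  unfolding below_def by (auto simp: less_Suc_eq)

lemma measurable_coup_A_U[measurable]:
  "(\<lambda>\<omega>. coup_A p B0 m (\<lambda>k. U (j - int k) \<omega>)) \<in> borel_measurable M"
  by (rule measurable_coup_A) simp

lemma coup_K_le_iff:
  "coup_K p B0 U j \<omega> \<le> enat m \<longleftrightarrow>
     (\<exists>m'\<le>m. ereal (U j \<omega>) < enn2ereal (coup_A p B0 m' (\<lambda>k. U (j - int k) \<omega>)))"
proof
  assume "\<exists>m'\<le>m. ereal (U j \<omega>) < enn2ereal (coup_A p B0 m' (\<lambda>k. U (j - int k) \<omega>))"
  then obtain m' where "m' \<le> m" "ereal (U j \<omega>) < enn2ereal (coup_A p B0 m' (\<lambda>k. U (j - int k) \<omega>))"
    by auto
  then show "coup_K p B0 U j \<omega> \<le> enat m"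
    unfolding coup_K_def by (intro INF_lower2[of m']) auto
next
  assume K: "coup_K p B0 U j \<omega> \<le> enat m"
  show "\<exists>m'\<le>m. ereal (U j \<omega>) < enn2ereal (coup_A p B0 m' (\<lambda>k. U (j - int k) \<omega>))"
  proof (rule ccontr)
    assume "\<not> ?thesis"
    then have "enat (Suc m) \<le> coup_K p B0 U j \<omega>"
      unfolding coup_K_def by (intro INF_greatest) (auto simp: not_less_eq_eq)
    with K show False by (metis enat_ord_simps(1) not_less_eq_eq order_trans order_refl)
  qed
qed

lemma measurable_coup_K_le[measurable]: "Measurable.pred M (\<lambda>\<omega>. coup_K p B0 U j \<omega> \<le> enat m)"
  unfolding coup_K_le_iff by measurable

lemma coup_tau_nonneg_iff:
  "0 \<le> coup_tau p B0 U n \<omega> \<longleftrightarrow> (\<exists>s\<in>{0..n}. \<forall>j\<in>{s..n}. coup_K p B0 U j \<omega> \<le> enat (nat (j - s)))"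
proof
  assume "\<exists>s\<in>{0..n}. \<forall>j\<in>{s..n}. coup_K p B0 U j \<omega> \<le> enat (nat (j - s))"
  then obtain s where s: "0 \<le> s" "s \<le> n" "\<forall>j\<in>{s..n}. coup_K p B0 U j \<omega> \<le> enat (nat (j - s))"
    by auto
  then have "ereal (real_of_int s) \<le> coup_tau p B0 U n \<omega>"
    unfolding coup_tau_def by (intro Sup_upper) auto
  with s(1) show "0 \<le> coup_tau p B0 U n \<omega>" by (simp add: order_trans[rotated])
next
  assume nonneg: "0 \<le> coup_tau p B0 U n \<omega>"
  show "\<exists>s\<in>{0..n}. \<forall>j\<in>{s..n}. coup_K p B0 U j \<omega> \<le> enat (nat (j - s))"
  proof (rule ccontr)
    assume "\<not> ?thesis"
    then have "coup_tau p B0 U n \<omega> \<le> ereal (-1)"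
      unfolding coup_tau_def by (intro Sup_least) (force simp: not_le)
    from order_trans[OF nonneg this] show False by simp
  qed
qed

lemma coup_R0_eq:
  "coup_R0 p B0 M U = {\<omega> \<in> space M. \<forall>n::nat. \<exists>s\<in>{0..int n}. \<forall>j\<in>{s..int n}.
     coup_K p B0 U j \<omega> \<le> enat (nat (j - s))}"
  unfolding coup_R0_def by (simp add: coup_tau_nonneg_iff)

lemma sets_coup_R0: "coup_R0 p B0 M U \<in> sets M"
  unfolding coup_R0_eq by measurable

text \<open>On \<open>good\<close> every \<open>K'\<^sub>j\<close> with \<open>j \<ge> 0\<close> is at most \<open>j\<close>, so \<open>s = 0\<close> witnesses \<open>\<tau>\<^sub>n \<ge> 0\<close>.\<close>
lemma good_subset_coup_R0: "good \<subseteq> coup_R0 p B0 M U"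
proof
  fix \<omega> assume \<omega>: "\<omega> \<in> good"
  have "coup_K p B0 U j \<omega> \<le> enat (nat j)" if "0 \<le> j" for j
  proof -
    from \<omega> have "ereal (U (int (nat j)) \<omega>) < enn2ereal (A_U (nat j) \<omega>)"
      unfolding good_def by blast
    with that show ?thesis
      unfolding coup_K_le_iff A_U_def A_path_def by auto
  qed
  with \<omega> show "\<omega> \<in> coup_R0 p B0 M U" unfolding coup_R0_eq good_def by fastforce
qed

lemma emeasure_good_no_admissible:
  assumes "admissible p = {}"
  shows "emeasure M good = 1"
proof -
  have "good = space M"
    unfolding good_def A_U_def A_path_def coup_A_no_admissible[OF assms] by auto
  then show ?thesis by (simp add: P.emeasure_space_1)
qed

end

locale coupling_process_admissible = coupling_process +
  assumes admissible_nonempty: "admissible p \<noteq> {}"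
begin

interpretation P: prob_space M by (rule prob)

lemma coup_A_0_eq_a0: "coup_A p B0 0 u = ennreal a0"
proof -
  have "coup_A p B0 0 u \<noteq> top"
    using coup_A_le_1[OF admissible_nonempty, of 0 u] by (auto simp: top_unique)
  then show ?thesis unfolding a0_def by (simp add: coup_A_def less_top[symmetric])
qed

lemma a0_le_1: "a0 \<le> 1"
  using coup_A_le_1[OF admissible_nonempty, of 0] by (simp add: coup_A_0_eq_a0 ennreal_le_1)

lemma a0_nonneg: "0 \<le> a0"
  by (simp add: a0_def)

lemma a0_le_A_path: "ennreal a0 \<le> A_path h y"
  unfolding A_path_def using coup_A_0_le[of p B0 undefined h] by (simp add: coup_A_0_eq_a0)

lemma A_path_le_1: "A_path h y \<le> 1"
  unfolding A_path_def by (rule coup_A_le_1[OF admissible_nonempty])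

definition deficit :: "nat \<Rightarrow> ennreal" where
  "deficit h = (\<integral>\<^sup>+\<omega>. (1 - A_U h \<omega>) \<partial>M)"

lemma emeasure_below:
  "emeasure M (below m) = ennreal a0 ^ m"
proof (induction m)
  case 0
  have "below 0 = space M" by (simp add: below_def)
  then show ?case using P.emeasure_space_1 by simp
next
  case (Suc m)
  define I where "I = {0..<int m}"
  define f where "f z = (indicator {..<a0} (fst z) * indicator (below_path m) (snd z) :: ennreal)"
    for z :: "real \<times> (int \<Rightarrow> real)"
  have [measurable]: "(indicator (below_path m) :: _ \<Rightarrow> ennreal) \<in> borel_measurable (PiM I (\<lambda>_. borel))"
    by (rule measurable_indicator_below_path) (simp add: I_def)
  have f: "f \<in> borel_measurable (borel \<Otimes>\<^sub>M PiM I (\<lambda>_. borel))"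
    unfolding f_def[abs_def] by measurable
  have below_restrict: "restrict (\<lambda>i. U i \<omega>) I \<in> below_path m \<longleftrightarrow> \<omega> \<in> below m" if "\<omega> \<in> space M" for \<omega>
    using below_iff_restrict[OF that, of m I] by (simp add: I_def)
  have "emeasure M (below (Suc m)) = (\<integral>\<^sup>+\<omega>. indicator (below (Suc m)) \<omega> \<partial>M)"
    by simp
  also have "\<dots> = (\<integral>\<^sup>+\<omega>. f (U (int m) \<omega>, restrict (\<lambda>i. U i \<omega>) I) \<partial>M)"
    by (rule nn_integral_cong) (auto simp: f_def below_Suc below_restrict indicator_def)
  also have "\<dots> = (\<integral>\<^sup>+\<omega>. (\<integral>\<^sup>+x. f (x, restrict (\<lambda>i. U i \<omega>) I) \<partial>unit_uniform) \<partial>M)"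
    by (rule nn_integral_integrate_coordinate[OF _ f]) (simp add: I_def)
  also have "\<dots> = (\<integral>\<^sup>+\<omega>. ennreal a0 * indicator (below m) \<omega> \<partial>M)"
  proof (rule nn_integral_cong)
    fix \<omega> assume "\<omega> \<in> space M"
    then have "f (x, restrict (\<lambda>i. U i \<omega>) I) = indicator {..<a0} x * indicator (below m) \<omega>" for x
      by (simp add: f_def below_restrict indicator_def)
    then have "(\<integral>\<^sup>+x. f (x, restrict (\<lambda>i. U i \<omega>) I) \<partial>unit_uniform)
        = emeasure unit_uniform {..<a0} * indicator (below m) \<omega>"
      by (simp add: nn_integral_multc)
    then show "(\<integral>\<^sup>+x. f (x, restrict (\<lambda>i. U i \<omega>) I) \<partial>unit_uniform) = ennreal a0 * indicator (below m) \<omega>"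
      by (simp only: emeasure_unit_uniform_lessThan[OF a0_nonneg a0_le_1])
  qed
  also have "\<dots> = ennreal a0 * emeasure M (below m)"
    by (simp add: nn_integral_cmult)
  finally show ?case using Suc by simp
qed

text \<open>\<open>U\<^sub>h\<close> is uniform and independent of \<open>U\<^sub>0, \<dots>, U\<^sub>h\<^sub>-\<^sub>1\<close>, which determine \<open>below m\<close> and \<open>A\<^sub>h\<close>.\<close>
lemma emeasure_below_inter_fails:
  assumes "m \<le> h"
  shows "emeasure M (below m \<inter> fails h) = (\<integral>\<^sup>+\<omega>. indicator (below m) \<omega> * (1 - A_U h \<omega>) \<partial>M)"
proof -
  define I where "I = {0..<int h}"
  define Y where "Y \<omega> = restrict (\<lambda>i. U i \<omega>) I" for \<omega>
  have [measurable]: "A_path h \<in> borel_measurable (PiM I (\<lambda>_. borel))"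
    by (rule measurable_A_path) (simp add: I_def)
  have [measurable]: "(indicator (below_path m) :: _ \<Rightarrow> ennreal) \<in> borel_measurable (PiM I (\<lambda>_. borel))"
    by (rule measurable_indicator_below_path) (use assms in \<open>auto simp: I_def\<close>)
  define f where "f z = indicator (below_path m) (snd z) *
      (indicator {z. enn2ereal (A_path h (snd z)) \<le> ereal (fst z)} z :: ennreal)"
    for z :: "real \<times> (int \<Rightarrow> real)"
  have f: "f \<in> borel_measurable (borel \<Otimes>\<^sub>M PiM I (\<lambda>_. borel))"
    unfolding f_def[abs_def] by measurable
  have Y: "Y \<omega> \<in> below_path m \<longleftrightarrow> \<omega> \<in> below m" "A_path h (Y \<omega>) = A_U h \<omega>"
    if "\<omega> \<in> space M" for \<omega>
    using below_iff_restrict[OF that, of m I] assms unfolding Y_def A_U_def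
    by (auto simp: I_def intro: A_path_cong)
  have "emeasure M (below m \<inter> fails h) = (\<integral>\<^sup>+\<omega>. indicator (below m \<inter> fails h) \<omega> \<partial>M)"
    by simp
  also have "\<dots> = (\<integral>\<^sup>+\<omega>. f (U (int h) \<omega>, Y \<omega>) \<partial>M)"
    by (rule nn_integral_cong) (auto simp: f_def fails_def Y indicator_def)
  also have "\<dots> = (\<integral>\<^sup>+\<omega>. (\<integral>\<^sup>+x. f (x, Y \<omega>) \<partial>unit_uniform) \<partial>M)"
    unfolding Y_def by (rule nn_integral_integrate_coordinate[OF _ f]) (simp add: I_def)
  also have "\<dots> = (\<integral>\<^sup>+\<omega>. indicator (below m) \<omega> * (1 - A_U h \<omega>) \<partial>M)"
  proof (rule nn_integral_cong)
    fix \<omega> assume \<omega>: "\<omega> \<in> space M"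
    have "(\<integral>\<^sup>+x. f (x, Y \<omega>) \<partial>unit_uniform)
        = indicator (below m) \<omega> * (\<integral>\<^sup>+x. indicator {x. enn2ereal (A_U h \<omega>) \<le> ereal x} x \<partial>unit_uniform)"
      using Y[OF \<omega>] by (subst nn_integral_cmult[symmetric])
        (auto simp: f_def indicator_def intro!: nn_integral_cong)
    also have "\<dots> = indicator (below m) \<omega> * (1 - A_U h \<omega>)"
      using emeasure_unit_uniform_above[OF A_path_le_1[of h "\<lambda>i. U i \<omega>"]]
      by (subst nn_integral_indicator) (auto simp: A_U_def)
    finally show "(\<integral>\<^sup>+x. f (x, Y \<omega>) \<partial>unit_uniform) = indicator (below m) \<omega> * (1 - A_U h \<omega>)" .
  qed
  finally show ?thesis .
qed

text \<open>Integrating out \<open>U\<^sub>m\<close>: the factor \<open>1 - A\<^sub>h\<close> is largest when \<open>U\<^sub>m\<close> lies in no cell, which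
  happens on all of \<open>[a\<^sub>0, 1)\<close>; so restricting \<open>U\<^sub>m\<close> to \<open>[0, a\<^sub>0)\<close> costs at least the factor \<open>a\<^sub>0\<close>.\<close>
lemma nn_integral_below_Suc_le:
  assumes "m < h"
  shows "(\<integral>\<^sup>+\<omega>. indicator (below (Suc m)) \<omega> * (1 - A_U h \<omega>) \<partial>M)
    \<le> ennreal a0 * (\<integral>\<^sup>+\<omega>. indicator (below m) \<omega> * (1 - A_U h \<omega>) \<partial>M)"
proof -
  define I where "I = {0..<int h} - {int m}"
  define upd where "upd z = (snd z)(int m := fst z)" for z :: "real \<times> (int \<Rightarrow> real)"
  have mI: "int m \<notin> I" by (simp add: I_def)
  have below_I: "{0..<int m} \<subseteq> I" using assms by (auto simp: I_def)
  define \<psi> where "\<psi> z = indicator (below_path m) (snd z) * (1 - A_path h (upd z))" for z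
  have [measurable]: "(\<lambda>z. A_path h (upd z)) \<in> borel_measurable (borel \<Otimes>\<^sub>M PiM I (\<lambda>_. borel))"
    unfolding upd_def by (rule measurable_A_path_upd) (auto simp: I_def)
  have [measurable]: "(indicator (below_path m) :: _ \<Rightarrow> ennreal) \<in> borel_measurable (PiM I (\<lambda>_. borel))"
    by (rule measurable_indicator_below_path[OF below_I])
  have \<psi>: "\<psi> \<in> borel_measurable (borel \<Otimes>\<^sub>M PiM I (\<lambda>_. borel))"
    unfolding \<psi>_def[abs_def] by measurable
  have \<psi>_le: "\<psi> (x, y) \<le> \<psi> (a0, y)" for x y
  proof -
    have "A_path h (upd (a0, y)) \<le> A_path h (upd (x, y))"
      by (rule A_path_mono_cells) (auto simp: upd_def cell_ge_a0)
    then show ?thesis unfolding \<psi>_def by (auto intro!: mult_left_mono ennreal_mono_minus)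
  qed
  have \<psi>_eq: "\<psi> (x, y) = \<psi> (a0, y)" if "a0 \<le> x" "x < 1" for x y
  proof -
    have "A_path h (upd (x, y)) = A_path h (upd (a0, y))"
      by (intro A_path_cong) (auto simp: upd_def cell_ge_a0 that(1))
    then show ?thesis unfolding \<psi>_def by simp
  qed
  have \<psi>_U: "\<psi> (U (int m) \<omega>, restrict (\<lambda>i. U i \<omega>) I) = indicator (below m) \<omega> * (1 - A_U h \<omega>)"
    if "\<omega> \<in> space M" for \<omega>
  proof -
    have "A_path h (upd (U (int m) \<omega>, restrict (\<lambda>i. U i \<omega>) I)) = A_U h \<omega>"
      unfolding A_U_def by (rule A_path_cong) (auto simp: upd_def I_def)
    then show ?thesis
      using below_iff_restrict[OF that below_I] by (simp add: \<psi>_def indicator_def)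
  qed
  have "(\<integral>\<^sup>+\<omega>. indicator (below (Suc m)) \<omega> * (1 - A_U h \<omega>) \<partial>M)
      = (\<integral>\<^sup>+\<omega>. indicator {..<a0} (U (int m) \<omega>) * \<psi> (U (int m) \<omega>, restrict (\<lambda>i. U i \<omega>) I) \<partial>M)"
    by (rule nn_integral_cong) (auto simp: \<psi>_U below_Suc indicator_def)
  also have "\<dots> \<le> ennreal a0 * (\<integral>\<^sup>+\<omega>. \<psi> (U (int m) \<omega>, restrict (\<lambda>i. U i \<omega>) I) \<partial>M)"
    by (rule nn_integral_coordinate_lessThan_le[OF mI a0_nonneg a0_le_1 \<psi> \<psi>_le \<psi>_eq])
  also have "(\<integral>\<^sup>+\<omega>. \<psi> (U (int m) \<omega>, restrict (\<lambda>i. U i \<omega>) I) \<partial>M)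
      = (\<integral>\<^sup>+\<omega>. indicator (below m) \<omega> * (1 - A_U h \<omega>) \<partial>M)"
    by (rule nn_integral_cong) (simp add: \<psi>_U)
  finally show ?thesis .
qed

lemma nn_integral_below_le:
  assumes "m \<le> h"
  shows "(\<integral>\<^sup>+\<omega>. indicator (below m) \<omega> * (1 - A_U h \<omega>) \<partial>M) \<le> ennreal a0 ^ m * deficit h"
  using assms
proof (induction m)
  case 0
  have "(\<integral>\<^sup>+\<omega>. indicator (below 0) \<omega> * (1 - A_U h \<omega>) \<partial>M) = deficit h"
    unfolding deficit_def by (rule nn_integral_cong) (simp add: below_def)
  then show ?case by simp
next
  case (Suc m)
  have "(\<integral>\<^sup>+\<omega>. indicator (below (Suc m)) \<omega> * (1 - A_U h \<omega>) \<partial>M)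
      \<le> ennreal a0 * (\<integral>\<^sup>+\<omega>. indicator (below m) \<omega> * (1 - A_U h \<omega>) \<partial>M)"
    using Suc.prems by (intro nn_integral_below_Suc_le) simp
  also have "\<dots> \<le> ennreal a0 * (ennreal a0 ^ m * deficit h)"
    using Suc by (intro mult_left_mono) auto
  finally show ?case by (simp add: mult.assoc)
qed

lemma emeasure_below_inter_fails_le:
  "m \<le> h \<Longrightarrow> emeasure M (below m \<inter> fails h) \<le> ennreal a0 ^ m * deficit h"
  using emeasure_below_inter_fails nn_integral_below_le by simp

text \<open>Before time \<open>H\<close> the event \<open>below H\<close> forces the conditions of \<open>good\<close>, as \<open>a\<^sub>0 \<le> A\<^sub>h\<close>.\<close>
lemma below_subset_good_Un_fails:
  "below H \<subseteq> good \<union> (\<Union>i. below H \<inter> fails (i + H))"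
proof
  fix \<omega> assume below: "\<omega> \<in> below H"
  then have \<omega>: "\<omega> \<in> space M" by (simp add: below_def)
  show "\<omega> \<in> good \<union> (\<Union>i. below H \<inter> fails (i + H))"
  proof (cases "\<omega> \<in> good")
    case False
    then obtain h where h: "\<not> ereal (U (int h) \<omega>) < enn2ereal (A_U h \<omega>)"
      using \<omega> by (auto simp: good_def)
    have "H \<le> h"
    proof (rule ccontr)
      assume "\<not> H \<le> h"
      with below have "ereal (U (int h) \<omega>) < enn2ereal (ennreal a0)"
        using a0_nonneg by (simp add: below_def)
      also have "\<dots> \<le> enn2ereal (A_U h \<omega>)"
        using a0_le_A_path unfolding A_U_def less_eq_ennreal.rep_eq by blast
      finally show False using h by simp
    qed
    moreover have "\<omega> \<in> fails h" using h \<omega> by (simp add: fails_def not_less)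
    ultimately have "\<omega> \<in> below H \<inter> fails ((h - H) + H)" using below by simp
    then show ?thesis by blast
  qed simp
qed

lemma coup_prod_eq: "coup_prod p B0 U \<omega> = lim (\<lambda>N. \<Prod>h<N. inverse (A_U h \<omega>))"
  unfolding coup_prod_def A_U_def A_path_def by simp

context
  assumes L1: "(\<integral>\<^sup>+ \<omega>. coup_prod p B0 U \<omega> \<partial>M) < \<infinity>"
begin

lemma a0_pos: "0 < a0"
proof (rule ccontr)
  assume "\<not> 0 < a0"
  then have "a0 = 0" using a0_nonneg by simp
  then have "(\<integral>\<^sup>+\<omega>. inverse (A_U 0 \<omega>) \<partial>M) = \<infinity>"
    using P.emeasure_space_1 by (simp add: A_U_def A_path_def coup_A_0_eq_a0)
  moreover have "(\<integral>\<^sup>+\<omega>. inverse (A_U 0 \<omega>) \<partial>M) \<le> (\<integral>\<^sup>+ \<omega>. coup_prod p B0 U \<omega> \<partial>M)"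
    unfolding coup_prod_eq A_U_def
    by (intro nn_integral_mono lim_prod_inverse_lower_bounds(2) A_path_le_1)
  ultimately show False using L1 by (simp add: top_unique)
qed

lemma suminf_deficit_finite: "(\<Sum>h. deficit h) < \<infinity>"
proof -
  have "(\<Sum>h. deficit h) = (\<integral>\<^sup>+\<omega>. (\<Sum>h. 1 - A_U h \<omega>) \<partial>M)"
    unfolding deficit_def by (rule nn_integral_suminf[symmetric]) simp
  also have "\<dots> \<le> (\<integral>\<^sup>+ \<omega>. coup_prod p B0 U \<omega> \<partial>M)"
    unfolding coup_prod_eq A_U_def
    by (intro nn_integral_mono lim_prod_inverse_lower_bounds(1) A_path_le_1)
  finally show ?thesis using L1 by (rule le_less_trans)
qed

lemma emeasure_good_pos: "0 < emeasure M good"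
proof (rule ccontr)
  assume "\<not> 0 < emeasure M good"
  then have null: "emeasure M good = 0" by simp
  obtain H where H: "(\<Sum>i. deficit (i + H)) < 1"
    using ennreal_suminf_tail_less[OF suminf_deficit_finite, of 1] by auto
  define c where "c = ennreal a0 ^ H"
  have "c = ennreal (a0 ^ H)" unfolding c_def using a0_nonneg by (simp add: ennreal_power)
  then have c: "0 < c" "c < top" using a0_pos by simp_all
  have "c = emeasure M (below H)" by (simp add: emeasure_below c_def)
  also have "\<dots> \<le> emeasure M (good \<union> (\<Union>i. below H \<inter> fails (i + H)))"
    by (rule emeasure_mono[OF below_subset_good_Un_fails]) measurable
  also have "\<dots> \<le> emeasure M good + emeasure M (\<Union>i. below H \<inter> fails (i + H))"
    by (rule emeasure_subadditive) measurable
  also have "emeasure M (\<Union>i. below H \<inter> fails (i + H)) \<le> (\<Sum>i. emeasure M (below H \<inter> fails (i + H)))"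
    by (rule emeasure_subadditive_countably) auto
  also have "\<dots> \<le> (\<Sum>i. c * deficit (i + H))"
    unfolding c_def by (intro suminf_le emeasure_below_inter_fails_le) auto
  also have "\<dots> = c * (\<Sum>i. deficit (i + H))" by simp
  also have "\<dots> < c * 1" using H c by (intro ennreal_mult_strict_left_mono)
  finally show False using null by simp
qed

end

end

theorem theorem1:
  fixes p :: "'g::countable \<Rightarrow> (nat \<Rightarrow> 'g) \<Rightarrow> real"
    and B0 :: "'g \<Rightarrow> real set"
    and M :: "'a measure"
    and U :: "int \<Rightarrow> 'a \<Rightarrow> real"
  assumes kernel_meas: "\<And>g. p g \<in> borel_measurable (Pi\<^sub>M UNIV (\<lambda>_::nat. count_space (UNIV::'g set)))"
    and kernel_nonneg: "\<And>g w. p g w \<ge> 0"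
    and kernel_sum: "\<And>w. ((\<lambda>g. p g w) has_sum 1) UNIV"
    and a_lim: "\<And>w. w \<in> admissible p \<Longrightarrow> (\<lambda>k. coup_a_sum p k w) \<longlonglongrightarrow> 1"
    and B0_int: "\<And>g. \<exists>l. B0 g = {l..<l + enn2real (coup_a p 0 g undefined)}"
    and B0_disj: "disjoint_family B0"
    and B0_union: "(\<Union>g. B0 g) = {0..<enn2real (coup_a_sum p 0 undefined)}"
    and prob: "prob_space M"
    and indep: "prob_space.indep_vars M (\<lambda>_. borel) U UNIV"
    and unif: "\<And>i. distr M lborel (U i) = uniform_measure lborel {0..<1::real}"
    and L1_meas: "coup_prod p B0 U \<in> borel_measurable M"
    and L1: "(\<integral>\<^sup>+ \<omega>. coup_prod p B0 U \<omega> \<partial>M) < \<infinity>"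
  shows "measure M (coup_R0 p B0 M U) > 0"
proof -
  have process: "coupling_process p B0 M U"
    by (intro coupling_process.intro coupling_partition.intro coupling_process_axioms.intro)
      (fact assms)+
  interpret coupling_process p B0 M U by (rule process)
  interpret P: prob_space M by (rule prob)
  have "0 < emeasure M good"
  proof (cases "admissible p = {}")
    case True
    then show ?thesis by (simp add: emeasure_good_no_admissible)
  next
    case False
    then interpret coupling_process_admissible p B0 M U
      by (intro coupling_process_admissible.intro process coupling_process_admissible_axioms.intro)
    show ?thesis by (rule emeasure_good_pos[OF L1])
  qed
  also have "\<dots> \<le> emeasure M (coup_R0 p B0 M U)"
    by (rule emeasure_mono[OF good_subset_coup_R0 sets_coup_R0])
  finally show ?thesis by (simp add: P.emeasure_eq_measure)
qed

end
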